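(* Let $f:(\mathbb{C}^3,0)\to(\mathbb{C}^3,0)$ be a degenerate spike $$f(x,y,z)=(x+z^c(\lambda x+P),\; y+z^c(\mu y+Q),\; z+z^{c+1}R),$$ with $c\in\mathbb{N}^*$, $\lambda\in\mathbb{C}^*$, $\mu\in\lambda\mathbb{R}_{<0}$, $P,Q\in\mathfrak{m}^2$, $R\in\mathfrak{m}$. Then there exists a unique formal $f$-invariant curve $C$ not contained in $E=\{z=0\}$. Moreover $C$ is smooth and transverse to $E$.
   Context: $\mathfrak{m}$ is the maximal ideal at $0$. A formal curve is an irreducible formal curve at $0$. It is $f$-invariant if $f$ maps it to itself. *)

theory Defs
  imports Complex_Main "HOL-Computational_Algebra.Formal_Power_Series"
begin

text \<open>Formal power series in three variables x, y, z over the complex numbers,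
  realised as C[[x]][[y]][[z]] (which is isomorphic to C[[x,y,z]]).
  The outer variable is z, the middle one y, the innermost one x.\<close>
type_synonym ser3 = "complex fps fps fps"

definition coeff3 :: "ser3 \<Rightarrow> nat \<Rightarrow> nat \<Rightarrow> nat \<Rightarrow> complex" where
  "coeff3 g i j k = fps_nth (fps_nth (fps_nth g k) j) i"

definition mk3 :: "(nat \<Rightarrow> nat \<Rightarrow> nat \<Rightarrow> complex) \<Rightarrow> ser3" where
  "mk3 h = Abs_fps (\<lambda>k. Abs_fps (\<lambda>j. Abs_fps (\<lambda>i. h i j k)))"

definition X3 :: ser3 where "X3 = fps_const (fps_const fps_X)"
definition Y3 :: ser3 where "Y3 = fps_const fps_X"
definition Z3 :: ser3 where "Z3 = fps_X"

definition in_max_pow :: "ser3 \<Rightarrow> nat \<Rightarrow> bool" where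
  "in_max_pow g d \<longleftrightarrow> (\<forall>i j k. i + j + k < d \<longrightarrow> coeff3 g i j k = 0)"

text \<open>Composition g o F for a formal map F = (F1,F2,F3) fixing 0.\<close>
definition comp3 :: "ser3 \<Rightarrow> ser3 \<times> ser3 \<times> ser3 \<Rightarrow> ser3" where
  "comp3 g F = (case F of (F1, F2, F3) \<Rightarrow>
     mk3 (\<lambda>p q r. \<Sum>i\<le>p+q+r. \<Sum>j\<le>p+q+r. \<Sum>k\<le>p+q+r.
        coeff3 g i j k * coeff3 (F1 ^ i * F2 ^ j * F3 ^ k) p q r))"

type_synonym arc = "complex fps \<times> complex fps \<times> complex fps"

definition is_arc :: "arc \<Rightarrow> bool" where
  "is_arc \<gamma> = (case \<gamma> of (a, b, c) \<Rightarrow>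
     fps_nth a 0 = 0 \<and> fps_nth b 0 = 0 \<and> fps_nth c 0 = 0 \<and> \<gamma> \<noteq> (0, 0, 0))"

definition subst3 :: "ser3 \<Rightarrow> arc \<Rightarrow> complex fps" where
  "subst3 g \<gamma> = (case \<gamma> of (a, b, c) \<Rightarrow>
     Abs_fps (\<lambda>n. \<Sum>i\<le>n. \<Sum>j\<le>n. \<Sum>k\<le>n. coeff3 g i j k * fps_nth (a ^ i * b ^ j * c ^ k) n))"

definition curve_ideal :: "arc \<Rightarrow> ser3 set" where
  "curve_ideal \<gamma> = {g. subst3 g \<gamma> = 0}"

text \<open>An (irreducible) formal curve at 0 is identified with its (prime) ideal,
  which is the ideal of a non-constant formal arc.\<close>
definition formal_curve :: "ser3 set \<Rightarrow> bool" where
  "formal_curve C \<longleftrightarrow> (\<exists>\<gamma>. is_arc \<gamma> \<and> C = curve_ideal \<gamma>)"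

definition invariant_curve :: "ser3 \<times> ser3 \<times> ser3 \<Rightarrow> ser3 set \<Rightarrow> bool" where
  "invariant_curve F C \<longleftrightarrow> (\<forall>g\<in>C. comp3 g F \<in> C)"

definition contained_in_E :: "ser3 set \<Rightarrow> bool" where
  "contained_in_E C \<longleftrightarrow> Z3 \<in> C"

definition smooth_curve :: "ser3 set \<Rightarrow> bool" where
  "smooth_curve C \<longleftrightarrow> (\<exists>a b c. is_arc (a, b, c) \<and> C = curve_ideal (a, b, c) \<and>
      (fps_nth a 1 \<noteq> 0 \<or> fps_nth b 1 \<noteq> 0 \<or> fps_nth c 1 \<noteq> 0))"

definition transverse_E :: "ser3 set \<Rightarrow> bool" where
  "transverse_E C \<longleftrightarrow> (\<exists>a b c. is_arc (a, b, c) \<and> C = curve_ideal (a, b, c) \<and>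
      fps_nth c 1 \<noteq> 0)"

definition spike :: "nat \<Rightarrow> complex \<Rightarrow> complex \<Rightarrow> ser3 \<Rightarrow> ser3 \<Rightarrow> ser3 \<Rightarrow> ser3 \<times> ser3 \<times> ser3" where
  "spike c lam mu P Q R =
     (X3 + Z3 ^ c * (fps_const (fps_const (fps_const lam)) * X3 + P),
      Y3 + Z3 ^ c * (fps_const (fps_const (fps_const mu)) * Y3 + Q),
      Z3 + Z3 ^ (c + 1) * R)"

end

theory Submission
  imports Defs "HOL-Library.Product_Plus" "HOL-Computational_Algebra.Polynomial"
    "HOL-Analysis.Complex_Transcendental"
begin

(*
  The invariant curve is a graph x = phi(z), y = psi(z). Along such a graph f moves the
  parameter z to z + z^(c+1) R, and invariance of the graph says
  phi(z + z^(c+1) R) = phi + z^c (lam phi + P) and likewise for psi. Since the shift of the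
  parameter is of order z^(c+2), solving these equations for lam phi and mu psi is a
  contraction for the z-adic order, so a (unique) graph exists.

  Conversely, a formal curve not contained in E = {z = 0} has a parametrisation
  (a(t), b(t), t^m). Each coordinate a is a root of the polynomial prod_j (T - a(w^j t)),
  w = exp(2 pi i / m), whose coefficients are series in t^m = z; so this polynomial is an
  element of the ideal of the curve. Invariance of the ideal therefore forces f to act on the
  arc by a reparametrisation t -> zeta k(t) with zeta^m = 1 and k = t + O(t^(mc+2)). For
  u = a - phi(t^m) this gives u(zeta t) - u(t) = lam t^(mc) u(t) + higher order terms, and
  comparing the coefficients of t^d and t^(d+mc) shows that u vanishes to every order;
  likewise for b. Hence the curve is the graph, which is smooth and transverse to E.
*)

unbundle fps_syntax
unbundle no vec_syntax

subsection \<open>Three-variable series and their coefficients\<close>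

definition const3 :: "complex \<Rightarrow> ser3" where
  "const3 a = fps_const (fps_const (fps_const a))"

definition mpow :: "'a \<times> 'a \<times> 'a \<Rightarrow> nat \<times> nat \<times> nat \<Rightarrow> 'a::comm_monoid_mult" where
  "mpow p s = (case p of (u, v, w) \<Rightarrow> case s of (i, j, k) \<Rightarrow> u ^ i * v ^ j * w ^ k)"

definition mdeg :: "nat \<times> nat \<times> nat \<Rightarrow> nat" where
  "mdeg s = (case s of (i, j, k) \<Rightarrow> i + j + k)"

definition mcoeff :: "ser3 \<Rightarrow> nat \<times> nat \<times> nat \<Rightarrow> complex" where
  "mcoeff g s = (case s of (i, j, k) \<Rightarrow> coeff3 g i j k)"

definition cube :: "nat \<Rightarrow> (nat \<times> nat \<times> nat) set" where
  "cube N = {..N} \<times> {..N} \<times> {..N}"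

abbreviation monom3 :: "nat \<times> nat \<times> nat \<Rightarrow> ser3" where
  "monom3 s \<equiv> mpow (X3, Y3, Z3) s"

lemma mpow_Pair [simp]: "mpow (u, v, w) (i, j, k) = u ^ i * v ^ j * w ^ k"
  by (simp add: mpow_def)

lemma mdeg_Pair [simp]: "mdeg (i, j, k) = i + j + k"
  by (simp add: mdeg_def)

lemma mcoeff_Pair [simp]: "mcoeff g (i, j, k) = coeff3 g i j k"
  by (simp add: mcoeff_def)

lemma mpow_add: "mpow p (s + t) = mpow p s * mpow p t"
  by (cases p; cases s; cases t) (simp add: power_add ac_simps)

lemma finite_cube [simp]: "finite (cube N)"
  by (simp add: cube_def)

lemma cube_mono: "n \<le> N \<Longrightarrow> cube n \<subseteq> cube N"
  by (auto simp: cube_def)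

lemma mdeg_gt_if_not_in_cube: "s \<notin> cube n \<Longrightarrow> n < mdeg s"
  by (cases s) (auto simp: cube_def)

lemma in_cube_mdeg: "s \<in> cube (mdeg s)"
  by (cases s) (auto simp: cube_def)

lemma coeff3_add [simp]: "coeff3 (g + h) i j k = coeff3 g i j k + coeff3 h i j k"
  by (simp add: coeff3_def)

lemma coeff3_diff [simp]: "coeff3 (g - h) i j k = coeff3 g i j k - coeff3 h i j k"
  by (simp add: coeff3_def)

lemma coeff3_0 [simp]: "coeff3 0 i j k = 0"
  by (simp add: coeff3_def)

lemma coeff3_sum: "coeff3 (sum f S) i j k = (\<Sum>s\<in>S. coeff3 (f s) i j k)"
  by (induct S rule: infinite_finite_induct) auto

lemma coeff3_const3_mult [simp]: "coeff3 (const3 a * g) i j k = a * coeff3 g i j k"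
  by (simp add: coeff3_def const3_def)

lemma coeff3_mult:
  "coeff3 (g * h) I J K =
     (\<Sum>k\<le>K. \<Sum>j\<le>J. \<Sum>i\<le>I. coeff3 g i j k * coeff3 h (I - i) (J - j) (K - k))"
  by (simp add: coeff3_def fps_mult_nth atLeast0AtMost fps_sum_nth sum_distrib_left
      sum_distrib_right mult.assoc)

lemma coeff3_monom3: "coeff3 (monom3 s) p q r = (if s = (p, q, r) then 1 else 0)"
proof (cases s)
  case (fields i j k)
  have "monom3 s = fps_const (fps_const (fps_X ^ i) * fps_X ^ j) * fps_X ^ k"
    by (simp add: fields X3_def Y3_def Z3_def fps_const_power fps_const_mult)
  then show ?thesis
    by (auto simp: fields coeff3_def fps_X_power_mult_right_nth fps_const_def)
qed

lemma in_max_pow_mult: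
  assumes "in_max_pow g d" "in_max_pow h e"
  shows "in_max_pow (g * h) (d + e)"
  unfolding in_max_pow_def
proof (intro allI impI)
  fix I J K assume IJK: "I + J + K < d + e"
  have "coeff3 g i j k * coeff3 h (I - i) (J - j) (K - k) = 0"
    if "i \<le> I" "j \<le> J" "k \<le> K" for i j k
  proof (cases "i + j + k < d")
    case True
    then show ?thesis using assms(1) by (simp add: in_max_pow_def)
  next
    case False
    then have "(I - i) + (J - j) + (K - k) < e" using that IJK by linarith
    then show ?thesis using assms(2) by (simp add: in_max_pow_def)
  qed
  then show "coeff3 (g * h) I J K = 0"
    unfolding coeff3_mult by (intro sum.neutral ballI) auto
qed

lemma in_max_pow_add: "in_max_pow g d \<Longrightarrow> in_max_pow h d \<Longrightarrow> in_max_pow (g + h) d"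
  by (simp add: in_max_pow_def)

lemma in_max_pow_0 [simp]: "in_max_pow g 0"
  by (simp add: in_max_pow_def)

lemma in_max_pow_mono: "in_max_pow g d \<Longrightarrow> e \<le> d \<Longrightarrow> in_max_pow g e"
  by (simp add: in_max_pow_def)

lemma in_max_pow_power: "in_max_pow g d \<Longrightarrow> in_max_pow (g ^ n) (n * d)"
  by (induct n) (auto dest: in_max_pow_mult[of g d "g ^ _"] simp: add.commute)

lemma in_max_pow_X3: "in_max_pow X3 1"
  and in_max_pow_Y3: "in_max_pow Y3 1"
  and in_max_pow_Z3: "in_max_pow Z3 1"
  using coeff3_monom3[of "(1, 0, 0)"] coeff3_monom3[of "(0, 1, 0)"] coeff3_monom3[of "(0, 0, 1)"]
  by (auto simp: in_max_pow_def)

lemma in_max_pow_mpow: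
  assumes "in_max_pow u 1" "in_max_pow v 1" "in_max_pow w 1"
  shows "in_max_pow (mpow (u, v, w) s) (mdeg s)"
proof (cases s)
  case (fields i j k)
  then show ?thesis
    using in_max_pow_power[OF assms(1), of i] in_max_pow_power[OF assms(2), of j]
      in_max_pow_power[OF assms(3), of k]
    by (auto intro!: in_max_pow_mult)
qed

definition trunc3 :: "nat \<Rightarrow> ser3 \<Rightarrow> ser3" where
  "trunc3 N g = (\<Sum>s\<in>cube N. const3 (mcoeff g s) * monom3 s)"

lemma coeff3_trunc3:
  "coeff3 (trunc3 N g) p q r = (if (p, q, r) \<in> cube N then coeff3 g p q r else 0)"
proof -
  have "coeff3 (trunc3 N g) p q r = (\<Sum>s\<in>cube N. if s = (p, q, r) then mcoeff g s else 0)"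
    unfolding trunc3_def coeff3_sum by (intro sum.cong refl) (simp add: coeff3_monom3)
  then show ?thesis by simp
qed

lemma in_max_pow_diff_trunc3: "in_max_pow (g - trunc3 N g) (Suc N)"
  by (auto simp: in_max_pow_def coeff3_trunc3 cube_def)

subsection \<open>Order of vanishing of one-variable series\<close>

definition vanishes_to :: "'a::zero fps \<Rightarrow> nat \<Rightarrow> bool" where
  "vanishes_to f N \<longleftrightarrow> (\<forall>n<N. f $ n = 0)"

lemma vanishes_to_0 [simp]: "vanishes_to 0 N" "vanishes_to f 0"
  by (simp_all add: vanishes_to_def)

lemma vanishes_to_1_iff [simp]:
  "vanishes_to f 1 \<longleftrightarrow> f $ 0 = 0" "vanishes_to f (Suc 0) \<longleftrightarrow> f $ 0 = 0"
  by (simp_all add: vanishes_to_def)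

lemma vanishes_to_add:
  "vanishes_to f N \<Longrightarrow> vanishes_to g N \<Longrightarrow> vanishes_to (f + g :: 'a::monoid_add fps) N"
  by (simp add: vanishes_to_def)

lemma vanishes_to_diff:
  "vanishes_to f N \<Longrightarrow> vanishes_to g N \<Longrightarrow> vanishes_to (f - g :: 'a::group_add fps) N"
  by (simp add: vanishes_to_def)

lemma vanishes_to_mono: "vanishes_to f N \<Longrightarrow> M \<le> N \<Longrightarrow> vanishes_to f M"
  by (simp add: vanishes_to_def)

lemma vanishes_to_mult:
  fixes f g :: "'a::comm_ring_1 fps"
  assumes "vanishes_to f d" "vanishes_to g e"
  shows "vanishes_to (f * g) (d + e)"
  unfolding vanishes_to_def fps_mult_nth
proof (intro allI impI sum.neutral ballI)
  fix n i assume "n < d + e" "i \<in> {0..n}"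
  then show "f $ i * g $ (n - i) = 0"
    using assms by (cases "i < d") (auto simp: vanishes_to_def)
qed

lemma vanishes_to_mult_left: "vanishes_to g e \<Longrightarrow> vanishes_to (f * g :: 'a::comm_ring_1 fps) e"
  using vanishes_to_mult[of f 0 g e] by simp

lemma vanishes_to_power: "vanishes_to f d \<Longrightarrow> vanishes_to (f ^ i :: 'a::comm_ring_1 fps) (i * d)"
  by (induct i) (auto dest: vanishes_to_mult[of f d "f ^ _"] simp: add.commute)

lemma vanishes_to_X_power_mult:
  "vanishes_to f n \<Longrightarrow> vanishes_to (fps_X ^ c * f :: 'a::comm_ring_1 fps) (n + c)"
  by (simp add: vanishes_to_def fps_X_power_mult_nth)

lemma vanishes_to_shift: "vanishes_to f (n + c) \<Longrightarrow> vanishes_to (fps_shift c f) n"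
  by (simp add: vanishes_to_def)

lemma X_power_mult_shift:
  "vanishes_to f c \<Longrightarrow> fps_X ^ c * fps_shift c f = (f :: 'a::comm_ring_1 fps)"
  by (rule fps_ext) (simp add: fps_X_power_mult_nth vanishes_to_def)

lemma fps_eq_if_vanishes_to: "(\<And>n. vanishes_to (f - g) n) \<Longrightarrow> f = (g :: 'a::group_add fps)"
proof (rule fps_ext)
  fix n
  assume "\<And>n. vanishes_to (f - g) n"
  then have "(f - g) $ n = 0" unfolding vanishes_to_def by blast
  then show "f $ n = g $ n" by simp
qed

lemma vanishes_to_mult_diff:
  fixes x y x' y' :: "'a::comm_ring_1 fps"
  assumes "vanishes_to (x - x') (N + d)" "vanishes_to (y - y') (N + e)"
    and "vanishes_to x d" "vanishes_to y' e"
  shows "vanishes_to (x * y - x' * y') (N + d + e)"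
proof -
  have "x * y - x' * y' = x * (y - y') + (x - x') * y'"
    by (simp add: algebra_simps)
  moreover have "vanishes_to (x * (y - y')) (N + d + e)"
    using vanishes_to_mult[OF assms(3,2)] by (simp add: ac_simps)
  moreover have "vanishes_to ((x - x') * y') (N + d + e)"
    using vanishes_to_mult[OF assms(1,4)] .
  ultimately show ?thesis by (simp add: vanishes_to_add)
qed

lemma vanishes_to_power_diff:
  fixes x x' :: "'a::comm_ring_1 fps"
  assumes "vanishes_to (x - x') (Suc N)" "x $ 0 = 0" "x' $ 0 = 0"
  shows "vanishes_to (x ^ i - x' ^ i) (N + i)"
proof (induct i)
  case (Suc i)
  have "vanishes_to (x * x ^ i - x' * x' ^ i) (N + 1 + i)"
    by (rule vanishes_to_mult_diff) (use assms Suc vanishes_to_power[of x' 1 i] in simp_all)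
  then show ?case by simp
qed simp

lemma vanishes_to_mpow_diff:
  fixes u v w u' v' w' :: "'a::comm_ring_1 fps"
  assumes "vanishes_to (u - u') (Suc N)" "vanishes_to (v - v') (Suc N)"
    "vanishes_to (w - w') (Suc N)"
    and "u $ 0 = 0" "v $ 0 = 0" "w $ 0 = 0" "u' $ 0 = 0" "v' $ 0 = 0" "w' $ 0 = 0"
  shows "vanishes_to (mpow (u, v, w) s - mpow (u', v', w') s) (N + mdeg s)"
proof (cases s)
  case (fields i j k)
  have "vanishes_to (u ^ i * v ^ j - u' ^ i * v' ^ j) (N + i + j)"
    by (rule vanishes_to_mult_diff)
      (use assms vanishes_to_power_diff vanishes_to_power[of u 1] vanishes_to_power[of v' 1]
        in simp_all)
  then have "vanishes_to (u ^ i * v ^ j * w ^ k - u' ^ i * v' ^ j * w' ^ k) (N + (i + j) + k)"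
    by (intro vanishes_to_mult_diff)
      (use assms vanishes_to_power_diff vanishes_to_power[of w' 1]
        vanishes_to_mult[OF vanishes_to_power[of u 1 i] vanishes_to_power[of v 1 j]]
        in \<open>simp_all add: add.assoc\<close>)
  then show ?thesis by (simp add: fields add.assoc)
qed

lemma vanishes_to_compose:
  "vanishes_to f N \<Longrightarrow> vanishes_to (f oo k :: 'a::comm_ring_1 fps) N"
  by (simp add: vanishes_to_def fps_compose_nth)

lemma vanishes_to_compose_diff:
  fixes f k k' :: "'a::comm_ring_1 fps"
  assumes "vanishes_to f n" "vanishes_to (k - k') (Suc N)" "k $ 0 = 0" "k' $ 0 = 0"
  shows "vanishes_to ((f oo k) - (f oo k')) (N + n)"
  unfolding vanishes_to_def
proof (intro allI impI)
  fix l assume l: "l < N + n"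
  have "f $ i * (k ^ i - k' ^ i) $ l = 0" for i
  proof (cases "i < n")
    case True
    then show ?thesis using assms(1) by (simp add: vanishes_to_def)
  next
    case False
    then show ?thesis
      using vanishes_to_power_diff[OF assms(2-4), of i] l by (simp add: vanishes_to_def)
  qed
  then show "((f oo k) - (f oo k')) $ l = 0"
    by (simp add: fps_compose_nth sum_subtractf[symmetric] right_diff_distrib)
qed

lemma vanishes_to_compose_diff':
  fixes f k k' :: "'a::comm_ring_1 fps"
  assumes "vanishes_to (k - k') (Suc N)" "k $ 0 = 0" "k' $ 0 = 0"
  shows "vanishes_to ((f oo k) - (f oo k')) (Suc N)"
proof -
  define f0 where "f0 = f - fps_const (f $ 0)"
  have "(f oo k) - (f oo k') = (f0 oo k) - (f0 oo k')"
    by (simp add: f0_def fps_compose_sub_distrib)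
  moreover have "vanishes_to f0 1" by (simp add: f0_def)
  ultimately show ?thesis using vanishes_to_compose_diff[OF _ assms, of f0 1] by simp
qed

subsection \<open>Substituting an arc into a series\<close>

definition centered_arc :: "arc \<Rightarrow> bool" where
  "centered_arc \<gamma> \<longleftrightarrow> (case \<gamma> of (a, b, c) \<Rightarrow> a $ 0 = 0 \<and> b $ 0 = 0 \<and> c $ 0 = 0)"

lemma centered_arc_Pair [simp]: "centered_arc (a, b, c) \<longleftrightarrow> a $ 0 = 0 \<and> b $ 0 = 0 \<and> c $ 0 = 0"
  by (simp add: centered_arc_def)

lemma is_arc_iff: "is_arc \<gamma> \<longleftrightarrow> centered_arc \<gamma> \<and> \<gamma> \<noteq> (0, 0, 0)"
  by (cases \<gamma>) (simp add: is_arc_def)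

lemma vanishes_to_mpow_arc:
  assumes "centered_arc \<gamma>"
  shows "vanishes_to (mpow \<gamma> s) (mdeg s)"
proof (cases \<gamma>; cases s)
  fix a b c i j k assume \<gamma>: "\<gamma> = (a, b, c)" and s: "s = (i, j, k)"
  have "vanishes_to (a ^ i) i" "vanishes_to (b ^ j) j" "vanishes_to (c ^ k) k"
    using assms vanishes_to_power[of a 1 i] vanishes_to_power[of b 1 j] vanishes_to_power[of c 1 k]
    by (simp_all add: \<gamma>)
  then show ?thesis by (simp add: \<gamma> s vanishes_to_mult)
qed

lemma subst3_nth_cube:
  assumes "centered_arc \<gamma>" "n \<le> N"
  shows "subst3 g \<gamma> $ n = (\<Sum>s\<in>cube N. mcoeff g s * mpow \<gamma> s $ n)"
proof -
  have "subst3 g \<gamma> $ n = (\<Sum>s\<in>cube n. mcoeff g s * mpow \<gamma> s $ n)"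
    by (cases \<gamma>) (simp add: subst3_def cube_def sum.cartesian_product split_beta mcoeff_def mpow_def)
  also have "\<dots> = (\<Sum>s\<in>cube N. mcoeff g s * mpow \<gamma> s $ n)"
  proof (rule sum.mono_neutral_left)
    show "\<forall>s\<in>cube N - cube n. mcoeff g s * mpow \<gamma> s $ n = 0"
      using vanishes_to_mpow_arc[OF assms(1)] mdeg_gt_if_not_in_cube
      by (auto simp: vanishes_to_def)
  qed (use assms(2) cube_mono in auto)
  finally show ?thesis .
qed

lemma subst3_add: "subst3 (g + h) \<gamma> = subst3 g \<gamma> + subst3 h \<gamma>"
  by (cases \<gamma>) (simp add: subst3_def fps_eq_iff distrib_right sum.distrib)

lemma subst3_diff: "subst3 (g - h) \<gamma> = subst3 g \<gamma> - subst3 h \<gamma>"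
  by (cases \<gamma>) (simp add: subst3_def fps_eq_iff left_diff_distrib sum_subtractf)

lemma subst3_0 [simp]: "subst3 0 \<gamma> = 0"
  by (cases \<gamma>) (simp add: subst3_def fps_eq_iff)

lemma subst3_const3_mult: "subst3 (const3 a * g) \<gamma> = fps_const a * subst3 g \<gamma>"
  by (cases \<gamma>) (simp add: subst3_def fps_eq_iff sum_distrib_left mult.assoc)

lemma subst3_sum: "subst3 (sum f S) \<gamma> = (\<Sum>s\<in>S. subst3 (f s) \<gamma>)"
  by (induct S rule: infinite_finite_induct) (auto simp: subst3_add)

lemma subst3_nth_0: "in_max_pow g 1 \<Longrightarrow> subst3 g \<gamma> $ 0 = 0"
  by (cases \<gamma>) (simp add: subst3_def in_max_pow_def)

lemma subst3_monom3:
  assumes "centered_arc \<gamma>"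
  shows "subst3 (monom3 t) \<gamma> = mpow \<gamma> t"
proof (rule fps_ext)
  fix n
  have "subst3 (monom3 t) \<gamma> $ n = (\<Sum>s\<in>cube (n + mdeg t). if s = t then mpow \<gamma> s $ n else 0)"
    unfolding subst3_nth_cube[OF assms, of n "n + mdeg t", simplified]
    by (intro sum.cong refl) (auto simp: mcoeff_def coeff3_monom3 split: prod.splits)
  also have "\<dots> = mpow \<gamma> t $ n"
    using cube_mono[of "mdeg t" "n + mdeg t"] in_cube_mdeg[of t] by auto
  finally show "subst3 (monom3 t) \<gamma> $ n = mpow \<gamma> t $ n" .
qed

lemma subst3_trunc3:
  "centered_arc \<gamma> \<Longrightarrow> subst3 (trunc3 N g) \<gamma> = (\<Sum>s\<in>cube N. fps_const (mcoeff g s) * mpow \<gamma> s)"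
  by (simp add: trunc3_def subst3_sum subst3_const3_mult subst3_monom3)

lemma vanishes_to_subst3:
  assumes "in_max_pow g d" "centered_arc \<gamma>"
  shows "vanishes_to (subst3 g \<gamma>) d"
  unfolding vanishes_to_def
proof (intro allI impI)
  fix n assume "n < d"
  have zero: "mcoeff g s * mpow \<gamma> s $ n = 0" for s
  proof (cases "mdeg s < d")
    case True
    then show ?thesis using assms(1) by (cases s) (simp add: in_max_pow_def)
  next
    case False
    then show ?thesis
      using vanishes_to_mpow_arc[OF assms(2), of s] \<open>n < d\<close> by (simp add: vanishes_to_def)
  qed
  show "subst3 g \<gamma> $ n = 0"
    unfolding subst3_nth_cube[OF assms(2) order_refl] by (rule sum.neutral) (use zero in blast)
qed

lemma vanishes_to_subst3_diff_trunc3: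
  "centered_arc \<gamma> \<Longrightarrow> vanishes_to (subst3 g \<gamma> - subst3 (trunc3 N g) \<gamma>) (Suc N)"
  using vanishes_to_subst3[OF in_max_pow_diff_trunc3] by (simp add: subst3_diff)

lemma subst3_trunc3_mult:
  assumes "centered_arc \<gamma>"
  shows "subst3 (trunc3 N g * trunc3 N h) \<gamma> = subst3 (trunc3 N g) \<gamma> * subst3 (trunc3 N h) \<gamma>"
proof -
  have "trunc3 N g * trunc3 N h =
      (\<Sum>s\<in>cube N. \<Sum>t\<in>cube N. const3 (mcoeff g s * mcoeff h t) * monom3 (s + t))"
    unfolding trunc3_def sum_product mpow_add
    by (intro sum.cong refl) (simp add: const3_def ac_simps)
  then have "subst3 (trunc3 N g * trunc3 N h) \<gamma> =
      (\<Sum>s\<in>cube N. \<Sum>t\<in>cube N. fps_const (mcoeff g s * mcoeff h t) * mpow \<gamma> (s + t))"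
    by (simp add: subst3_sum subst3_const3_mult subst3_monom3[OF assms])
  also have "\<dots> = subst3 (trunc3 N g) \<gamma> * subst3 (trunc3 N h) \<gamma>"
    unfolding subst3_trunc3[OF assms] sum_product mpow_add
    by (intro sum.cong refl) (simp add: ac_simps flip: fps_const_mult)
  finally show ?thesis .
qed

lemma subst3_mult:
  assumes "centered_arc \<gamma>"
  shows "subst3 (g * h) \<gamma> = subst3 g \<gamma> * subst3 h \<gamma>"
proof (rule fps_ext)
  fix n
  let ?g = "trunc3 n g" and ?h = "trunc3 n h"
  have "g * h - ?g * ?h = (g - ?g) * h + ?g * (h - ?h)"
    by (simp add: algebra_simps)
  then have rest: "in_max_pow (g * h - ?g * ?h) (Suc n)"
    using in_max_pow_mult[OF in_max_pow_diff_trunc3 in_max_pow_0]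
      in_max_pow_mult[OF in_max_pow_0 in_max_pow_diff_trunc3]
    by (auto intro!: in_max_pow_add)
  have "vanishes_to (subst3 (g * h) \<gamma> - subst3 ?g \<gamma> * subst3 ?h \<gamma>) (Suc n)"
    using vanishes_to_subst3[OF rest assms] by (simp add: subst3_diff subst3_trunc3_mult[OF assms])
  moreover have "vanishes_to (subst3 g \<gamma> * subst3 h \<gamma> - subst3 ?g \<gamma> * subst3 ?h \<gamma>) (Suc n)"
    using vanishes_to_mult_diff[of _ _ "Suc n" 0 _ _ 0] vanishes_to_subst3_diff_trunc3[OF assms]
    by (metis add_0_right vanishes_to_0(2))
  ultimately have "vanishes_to (subst3 (g * h) \<gamma> - subst3 g \<gamma> * subst3 h \<gamma>) (Suc n)"
    using vanishes_to_diff by fastforce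
  then show "subst3 (g * h) \<gamma> $ n = (subst3 g \<gamma> * subst3 h \<gamma>) $ n"
    by (simp add: vanishes_to_def)
qed

lemma subst3_1:
  assumes "centered_arc \<gamma>"
  shows "subst3 1 \<gamma> = 1"
  using subst3_monom3[OF assms, of "(0, 0, 0)"] by (cases \<gamma>) simp

lemma subst3_power: "centered_arc \<gamma> \<Longrightarrow> subst3 (g ^ n) \<gamma> = subst3 g \<gamma> ^ n"
  by (induct n) (simp_all add: subst3_1 subst3_mult)

lemma subst3_const3: "centered_arc \<gamma> \<Longrightarrow> subst3 (const3 a) \<gamma> = fps_const a"
  using subst3_const3_mult[of a 1 \<gamma>] by (simp add: subst3_1)

lemma subst3_X3: "centered_arc (a, b, c) \<Longrightarrow> subst3 X3 (a, b, c) = a"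
  and subst3_Y3: "centered_arc (a, b, c) \<Longrightarrow> subst3 Y3 (a, b, c) = b"
  and subst3_Z3: "centered_arc (a, b, c) \<Longrightarrow> subst3 Z3 (a, b, c) = c"
  using subst3_monom3[of "(a, b, c)" "(1, 0, 0)"] subst3_monom3[of "(a, b, c)" "(0, 1, 0)"]
    subst3_monom3[of "(a, b, c)" "(0, 0, 1)"]
  by simp_all

lemma subst3_mpow:
  "centered_arc \<gamma> \<Longrightarrow> subst3 (mpow (f, g, h) s) \<gamma> = mpow (subst3 f \<gamma>, subst3 g \<gamma>, subst3 h \<gamma>) s"
  by (cases s) (simp add: subst3_mult subst3_power)

lemma vanishes_to_subst3_diff:
  assumes "in_max_pow g d" "centered_arc (a, b, c)" "centered_arc (a', b', c')"
    and "vanishes_to (a - a') (Suc N)" "vanishes_to (b - b') (Suc N)" "vanishes_to (c - c') (Suc N)"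
  shows "vanishes_to (subst3 g (a, b, c) - subst3 g (a', b', c')) (N + d)"
  unfolding vanishes_to_def
proof (intro allI impI)
  fix n assume n: "n < N + d"
  have zero: "mcoeff g s * (mpow (a, b, c) s - mpow (a', b', c') s) $ n = 0" for s
  proof (cases "mdeg s < d")
    case True
    then show ?thesis using assms(1) by (cases s) (simp add: in_max_pow_def)
  next
    case False
    then show ?thesis using vanishes_to_mpow_diff[OF assms(4-6), of s] assms(2,3) n
      by (simp add: vanishes_to_def)
  qed
  have "(subst3 g (a, b, c) - subst3 g (a', b', c')) $ n =
      (\<Sum>s\<in>cube n. mcoeff g s * (mpow (a, b, c) s - mpow (a', b', c') s) $ n)"
    by (simp add: subst3_nth_cube[OF assms(2) order_refl] subst3_nth_cube[OF assms(3) order_refl]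
        sum_subtractf[symmetric] right_diff_distrib)
  also have "\<dots> = 0" by (rule sum.neutral) (use zero in blast)
  finally show "(subst3 g (a, b, c) - subst3 g (a', b', c')) $ n = 0" .
qed

subsection \<open>Images and reparametrisations of arcs\<close>

definition image_arc :: "ser3 \<times> ser3 \<times> ser3 \<Rightarrow> arc \<Rightarrow> arc" where
  "image_arc F \<gamma> = (case F of (F1, F2, F3) \<Rightarrow> (subst3 F1 \<gamma>, subst3 F2 \<gamma>, subst3 F3 \<gamma>))"

definition fixes_origin :: "ser3 \<times> ser3 \<times> ser3 \<Rightarrow> bool" where
  "fixes_origin F \<longleftrightarrow> (case F of (F1, F2, F3) \<Rightarrow> in_max_pow F1 1 \<and> in_max_pow F2 1 \<and> in_max_pow F3 1)"

definition reparam_arc :: "arc \<Rightarrow> complex fps \<Rightarrow> arc" where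
  "reparam_arc \<gamma> \<sigma> = (case \<gamma> of (a, b, c) \<Rightarrow> (a oo \<sigma>, b oo \<sigma>, c oo \<sigma>))"

lemma reparam_arc_Pair: "reparam_arc (a, b, c) \<sigma> = (a oo \<sigma>, b oo \<sigma>, c oo \<sigma>)"
  by (simp add: reparam_arc_def)

lemma centered_image_arc: "fixes_origin F \<Longrightarrow> centered_arc \<gamma> \<Longrightarrow> centered_arc (image_arc F \<gamma>)"
  by (auto simp: fixes_origin_def image_arc_def subst3_nth_0 split: prod.splits)

lemma coeff3_comp3:
  "coeff3 (comp3 g F) p q r = (\<Sum>s\<in>cube (p + q + r). mcoeff g s * coeff3 (mpow F s) p q r)"
  by (cases F) (simp add: comp3_def mk3_def coeff3_def cube_def sum.cartesian_product split_beta
      mcoeff_def mpow_def)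

lemma in_max_pow_comp3_diff:
  assumes "fixes_origin F"
  shows "in_max_pow (comp3 g F - (\<Sum>s\<in>cube n. const3 (mcoeff g s) * mpow F s)) (Suc n)"
  unfolding in_max_pow_def
proof (intro allI impI)
  fix p q r assume pqr: "p + q + r < Suc n"
  have "(\<Sum>s\<in>cube n. mcoeff g s * coeff3 (mpow F s) p q r) =
      (\<Sum>s\<in>cube (p + q + r). mcoeff g s * coeff3 (mpow F s) p q r)"
  proof (rule sum.mono_neutral_right)
    show "\<forall>s\<in>cube n - cube (p + q + r). mcoeff g s * coeff3 (mpow F s) p q r = 0"
      using assms mdeg_gt_if_not_in_cube in_max_pow_mpow
      by (fastforce simp: fixes_origin_def in_max_pow_def split: prod.splits)
  qed (use pqr cube_mono in auto)
  then show "coeff3 (comp3 g F - (\<Sum>s\<in>cube n. const3 (mcoeff g s) * mpow F s)) p q r = 0"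
    by (simp add: coeff3_comp3 coeff3_sum)
qed

lemma subst3_comp3:
  assumes "fixes_origin F" "centered_arc \<gamma>"
  shows "subst3 (comp3 g F) \<gamma> = subst3 g (image_arc F \<gamma>)"
proof (rule fps_ext)
  fix n
  let ?S = "\<Sum>s\<in>cube n. const3 (mcoeff g s) * mpow F s"
  have "subst3 (comp3 g F) \<gamma> $ n = subst3 ?S \<gamma> $ n"
    using vanishes_to_subst3[OF in_max_pow_comp3_diff[OF assms(1)] assms(2)]
    by (simp add: subst3_diff vanishes_to_def)
  also have "subst3 ?S \<gamma> = (\<Sum>s\<in>cube n. fps_const (mcoeff g s) * mpow (image_arc F \<gamma>) s)"
    by (cases F) (simp add: subst3_sum subst3_const3_mult subst3_mpow[OF assms(2)] image_arc_def)
  also have "\<dots> $ n = subst3 g (image_arc F \<gamma>) $ n"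
    by (simp add: subst3_nth_cube[OF centered_image_arc[OF assms] order_refl] fps_sum_nth)
  finally show "subst3 (comp3 g F) \<gamma> $ n = subst3 g (image_arc F \<gamma>) $ n" .
qed

lemma subst3_reparam_arc:
  assumes "centered_arc \<gamma>" "\<sigma> $ 0 = 0"
  shows "subst3 g (reparam_arc \<gamma> \<sigma>) = subst3 g \<gamma> oo \<sigma>"
proof (rule fps_ext)
  fix n
  obtain a b c where \<gamma>: "\<gamma> = (a, b, c)" by (cases \<gamma>)
  have centered: "centered_arc (reparam_arc \<gamma> \<sigma>)"
    using assms by (simp add: \<gamma> reparam_arc_Pair)
  have "mpow (reparam_arc \<gamma> \<sigma>) s = mpow \<gamma> s oo \<sigma>" for s
    using assms(2) by (cases s) (simp add: \<gamma> reparam_arc_Pair fps_compose_mult_distrib fps_compose_power)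
  then have "subst3 g (reparam_arc \<gamma> \<sigma>) $ n = (subst3 (trunc3 n g) \<gamma> oo \<sigma>) $ n"
    by (simp add: subst3_nth_cube[OF centered order_refl] subst3_trunc3[OF assms(1)]
        fps_compose_sum_distrib fps_compose_mult_distrib[OF assms(2)] fps_sum_nth)
  also have "\<dots> = (subst3 g \<gamma> oo \<sigma>) $ n"
    using vanishes_to_compose[OF vanishes_to_subst3_diff_trunc3[OF assms(1), of g n], of \<sigma>]
    by (simp add: fps_compose_sub_distrib vanishes_to_def)
  finally show "subst3 g (reparam_arc \<gamma> \<sigma>) $ n = (subst3 g \<gamma> oo \<sigma>) $ n" .
qed

lemma subst3_compose_X_power:
  assumes "m > 0" "centered_arc (a, b, fps_X)"
  shows "subst3 g (a, b, fps_X) oo fps_X ^ m = subst3 g (a oo fps_X ^ m, b oo fps_X ^ m, fps_X ^ m)"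
  using subst3_reparam_arc[OF assms(2), of "fps_X ^ m" g] assms(1) by (simp add: reparam_arc_Pair)

lemma curve_ideal_reparam_arc:
  assumes "centered_arc \<gamma>" "\<sigma> $ 0 = 0" "\<sigma> \<noteq> 0"
  shows "curve_ideal (reparam_arc \<gamma> \<sigma>) = curve_ideal \<gamma>"
  using assms by (auto simp: curve_ideal_def subst3_reparam_arc fps_compose_eq_0_iff)

subsection \<open>Roots of series and parametrisations with \<open>z = t\<^sup>m\<close>\<close>

lemma fps_radical_power_eq:
  fixes w :: "complex fps"
  assumes "m > 0" "y ^ m = w $ 0" "w $ 0 \<noteq> 0"
  shows "fps_radical (\<lambda>_ _. y) m w ^ m = w" "fps_radical (\<lambda>_ _. y) m w $ 0 = y"
proof -
  obtain m' where m': "m = Suc m'" using assms(1) by (cases m) auto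
  show "fps_radical (\<lambda>_ _. y) m w ^ m = w"
    unfolding m' using power_radical[of w "\<lambda>_ _. y" m'] assms(2,3) m' by simp
  show "fps_radical (\<lambda>_ _. y) m w $ 0 = y" using assms(1) by simp
qed

lemma vanishes_to_diff_1_if_power:
  fixes \<rho> :: "complex fps"
  assumes "m > 0" "\<rho> $ 0 = 1" "vanishes_to (\<rho> ^ m - 1) N"
  shows "vanishes_to (\<rho> - 1) N"
proof -
  define S where "S = (\<Sum>i<m. \<rho> ^ i)"
  have "S $ 0 = of_nat m"
    by (simp add: S_def fps_sum_nth fps_nth_power_0 assms(2))
  then have "S * inverse S = 1" using assms(1) by (intro inverse_mult_eq_1') simp
  moreover have "\<rho> ^ m - 1 = (\<rho> - 1) * S" by (simp add: S_def power_diff_1_eq)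
  ultimately have "\<rho> - 1 = (\<rho> ^ m - 1) * inverse S" by (simp add: mult.assoc)
  then show ?thesis using vanishes_to_mult[OF assms(3), of "inverse S" 0] by simp
qed

lemma exists_reparam_to_X_power:
  fixes c :: "complex fps"
  assumes "c $ 0 = 0" "c \<noteq> 0"
  obtains \<sigma> where "\<sigma> $ 0 = 0" "\<sigma> \<noteq> 0" "c oo \<sigma> = fps_X ^ subdegree c"
proof -
  define m where "m = subdegree c"
  have m: "m > 0" using assms unfolding m_def by (metis gr0I subdegree_eq_0_iff)
  define e where "e = fps_shift m c"
  have c_eq: "c = fps_X ^ m * e"
    using fps_shift_times_fps_X_power[of m c] by (simp add: e_def m_def mult.commute)
  have e0: "e $ 0 \<noteq> 0" using assms(2) by (simp add: e_def m_def)
  obtain y where y: "e $ 0 = y ^ m" using exists_complex_root[of m "e $ 0"] m by blast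
  define \<rho> where "\<rho> = fps_radical (\<lambda>_ _. y) m e"
  have \<rho>: "\<rho> ^ m = e" "\<rho> $ 0 = y"
    using fps_radical_power_eq[OF m y[symmetric] e0] by (simp_all add: \<rho>_def)
  have "y \<noteq> 0" using y e0 m by auto
  define \<tau> where "\<tau> = fps_X * \<rho>"
  have \<tau>: "\<tau> $ 0 = 0" "\<tau> $ 1 \<noteq> 0" "\<tau> ^ m = c"
    using \<rho> \<open>y \<noteq> 0\<close> by (simp_all add: \<tau>_def power_mult_distrib c_eq)
  define \<sigma> where "\<sigma> = fps_inv \<tau>"
  have \<sigma>0: "\<sigma> $ 0 = 0" by (simp add: \<sigma>_def fps_inv_def)
  have "c oo \<sigma> = (\<tau> oo \<sigma>) ^ m" by (simp add: \<tau>(3)[symmetric] fps_compose_power[OF \<sigma>0])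
  also have "\<tau> oo \<sigma> = fps_X" by (simp add: \<sigma>_def fps_inv_right[OF \<tau>(1,2)])
  finally have "c oo \<sigma> = fps_X ^ m" .
  moreover have "\<sigma> \<noteq> 0"
  proof
    assume "\<sigma> = 0"
    then have "c oo \<sigma> = 0" using assms(1) by simp
    with \<open>c oo \<sigma> = fps_X ^ m\<close> show False by simp
  qed
  ultimately show ?thesis using that \<sigma>0 by (simp add: m_def)
qed

lemma curve_ideal_normal_form:
  assumes "centered_arc (a, b, c)" "c \<noteq> 0"
  obtains a' b' m where "m > 0" "centered_arc (a', b', fps_X ^ m)"
    "curve_ideal (a, b, c) = curve_ideal (a', b', fps_X ^ m)"
proof -
  obtain \<sigma> where \<sigma>: "\<sigma> $ 0 = 0" "\<sigma> \<noteq> 0" "c oo \<sigma> = fps_X ^ subdegree c"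
    using exists_reparam_to_X_power assms by auto
  have "subdegree c > 0" using assms by (metis centered_arc_Pair gr0I subdegree_eq_0_iff)
  moreover have "reparam_arc (a, b, c) \<sigma> = (a oo \<sigma>, b oo \<sigma>, fps_X ^ subdegree c)"
    using \<sigma>(3) by (simp add: reparam_arc_Pair)
  ultimately show ?thesis
    using that[of "subdegree c" "a oo \<sigma>" "b oo \<sigma>"] curve_ideal_reparam_arc[OF assms(1) \<sigma>(1,2)] \<sigma>(1)
      assms(1) by simp
qed

lemma exists_root_X_power_perturbation:
  fixes r :: "complex fps"
  assumes m: "m > 0" and r: "vanishes_to r (Suc M)"
  obtains k where "k $ 0 = 0" "k ^ m = fps_X ^ m * (1 + r)" "vanishes_to (k - fps_X) (M + 2)"
proof -
  have r0: "(1 + r) $ 0 = 1" using r by (simp add: vanishes_to_def)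
  define \<rho> where "\<rho> = fps_radical (\<lambda>_ _. 1) m (1 + r)"
  have \<rho>: "\<rho> ^ m = 1 + r" "\<rho> $ 0 = 1"
    using fps_radical_power_eq[of m 1 "1 + r"] m r0 by (simp_all add: \<rho>_def)
  have "vanishes_to (\<rho> ^ m - 1) (Suc M)" using r by (simp add: \<rho>(1))
  then have "vanishes_to (\<rho> - 1) (Suc M)" by (rule vanishes_to_diff_1_if_power[OF m \<rho>(2)])
  then have "vanishes_to (fps_X * (\<rho> - 1)) (M + 2)"
    using vanishes_to_X_power_mult[of "\<rho> - 1" "Suc M" 1] by (simp add: mult.commute)
  moreover have "fps_X * \<rho> - fps_X = fps_X * (\<rho> - 1)" by (simp add: right_diff_distrib)
  moreover have "(fps_X * \<rho>) ^ m = fps_X ^ m * (1 + r)" by (simp only: power_mult_distrib \<rho>(1))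
  ultimately show ?thesis using that[of "fps_X * \<rho>"] by simp
qed

subsection \<open>Rotations by roots of unity\<close>

definition unit_root :: "nat \<Rightarrow> complex" where
  "unit_root m = exp (2 * of_real pi * \<i> / of_nat m)"

lemma unit_root_power_eq_1_iff: "m > 0 \<Longrightarrow> unit_root m ^ n = 1 \<longleftrightarrow> m dvd n"
  using complex_root_unity_eq_1[of m n]
  by (simp add: unit_root_def exp_of_nat_mult[symmetric] mult_ac)

lemma rotation_invariant_fps:
  fixes h :: "'a::idom fps"
  assumes m: "m > 0" and \<zeta>: "\<And>n. \<zeta> ^ n = 1 \<Longrightarrow> m dvd n"
    and inv: "h oo (fps_const \<zeta> * fps_X) = h"
  shows "h = Abs_fps (\<lambda>n. h $ (n * m)) oo fps_X ^ m"
proof (rule fps_ext)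
  fix n
  have vanish: "h $ n = 0" if "\<not> m dvd n" for n
  proof -
    have "\<zeta> ^ n * h $ n = h $ n" using fps_nth_compose_linear[of h \<zeta> n] inv by simp
    then show ?thesis using \<zeta> that by (metis mult_cancel_right2)
  qed
  have "(Abs_fps (\<lambda>n. h $ (n * m)) oo fps_X ^ m) $ n = (\<Sum>l\<in>{0..n}. if n = m * l then h $ n else 0)"
    unfolding fps_compose_nth by (intro sum.cong refl) (auto simp: power_mult[symmetric] mult.commute)
  also have "\<dots> = h $ n"
  proof (cases "m dvd n")
    case True
    then obtain l where l: "n = m * l" by blast
    then have "l \<in> {0..n}" using m by simp
    moreover have "n = m * l' \<longleftrightarrow> l' = l" for l' using l m by auto
    ultimately show ?thesis by simp
  next
    case False
    then show ?thesis using vanish by (auto intro!: sum.neutral)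
  qed
  finally show "h $ n = (Abs_fps (\<lambda>n. h $ (n * m)) oo fps_X ^ m) $ n" ..
qed

lemma map_poly_compose_mult:
  fixes k :: "complex fps"
  assumes "k $ 0 = 0"
  shows "map_poly (\<lambda>f. f oo k) (p * q) = map_poly (\<lambda>f. f oo k) p * map_poly (\<lambda>f. f oo k) q"
  by (rule poly_eqI)
    (simp add: coeff_map_poly coeff_mult fps_compose_sum_distrib fps_compose_mult_distrib[OF assms])

lemma map_poly_compose_prod_linear:
  fixes k :: "complex fps"
  assumes "k $ 0 = 0"
  shows "map_poly (\<lambda>f. f oo k) (\<Prod>j\<in>S. [:- e j, 1:]) = (\<Prod>j\<in>S. [:- (e j oo k), 1:])"
proof (induct S rule: infinite_finite_induct)
  case (insert j S)
  have factor: "map_poly (\<lambda>f. f oo k) [:- e j, 1:] = [:- (e j oo k), 1:]"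
    by (simp add: map_poly_pCons fps_compose_uminus)
  show ?case
    by (simp only: prod.insert[OF insert.hyps(1,2)] map_poly_compose_mult[OF assms] factor
        insert.hyps(3))
qed simp_all

definition lift_z :: "complex fps \<Rightarrow> ser3" where
  "lift_z H = Abs_fps (\<lambda>k. fps_const (fps_const (H $ k)))"

lemma coeff3_lift_z: "coeff3 (lift_z H) i j k = (if i = 0 \<and> j = 0 then H $ k else 0)"
  by (simp add: coeff3_def lift_z_def)

lemma subst3_lift_z: "subst3 (lift_z H) (a, b, c) = H oo c"
proof (rule fps_ext)
  fix n :: nat
  have inner: "(\<Sum>j\<le>n. if i = 0 then if j = 0 then x else 0 else 0) = (if i = 0 then x else 0)"
    for i and x :: complex
    by simp
  have "subst3 (lift_z H) (a, b, c) $ n =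
      (\<Sum>i\<le>n. \<Sum>j\<le>n. \<Sum>k\<le>n. if i = 0 \<and> j = 0 then H $ k * (c ^ k) $ n else 0)"
    by (auto simp: subst3_def coeff3_lift_z intro!: sum.cong)
  also have "\<dots> = (\<Sum>i\<le>n. \<Sum>j\<le>n. if i = 0 then if j = 0 then (H oo c) $ n else 0 else 0)"
    by (intro sum.cong refl) (auto simp: fps_compose_nth atLeast0AtMost)
  also have "\<dots> = (H oo c) $ n" by (simp only: inner) simp
  finally show "subst3 (lift_z H) (a, b, c) $ n = (H oo c) $ n" .
qed

lemma rotation_orbit_polynomial_coeffs:
  fixes e :: "complex fps"
  assumes m: "m > 0"
  obtains H where
    "\<And>i. coeff (\<Prod>j<m. [:- (e oo (fps_const (unit_root m ^ j) * fps_X)), 1:]) i = H i oo fps_X ^ m"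
proof -
  define \<omega> where "\<omega> = unit_root m"
  define e' where "e' j = e oo (fps_const (\<omega> ^ j) * fps_X)" for j
  define p where "p = (\<Prod>j<m. [:- e' j, 1:])"
  have rotate: "e' j oo (fps_const \<omega> * fps_X) = e' (Suc j)" for j
  proof -
    have "e' j oo (fps_const \<omega> * fps_X) = e oo ((fps_const (\<omega> ^ j) * fps_X) oo (fps_const \<omega> * fps_X))"
      unfolding e'_def by (rule fps_compose_assoc[symmetric]) simp_all
    also have "(fps_const (\<omega> ^ j) * fps_X) oo (fps_const \<omega> * fps_X) = fps_const (\<omega> ^ Suc j) * fps_X"
      by (simp add: fps_compose_mult_distrib mult_ac flip: fps_const_mult)
    finally show ?thesis by (simp add: e'_def)
  qed
  obtain m' where m': "m = Suc m'" using m by (cases m) auto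
  have "e' m = e' 0" using unit_root_power_eq_1_iff[OF m, of m] by (simp add: e'_def \<omega>_def)
  have "(fps_const \<omega> * fps_X) $ 0 = 0" by simp
  then have "map_poly (\<lambda>f. f oo (fps_const \<omega> * fps_X)) p = (\<Prod>j<m. [:- e' (Suc j), 1:])"
    unfolding p_def by (simp only: map_poly_compose_prod_linear rotate)
  also have "\<dots> = (\<Prod>j<m'. [:- e' (Suc j), 1:]) * [:- e' 0, 1:]"
    using \<open>e' m = e' 0\<close> by (simp only: m' prod.lessThan_Suc)
  also have "\<dots> = p" unfolding p_def m' prod.lessThan_Suc_shift by (rule mult.commute)
  finally have p_rotate: "map_poly (\<lambda>f. f oo (fps_const \<omega> * fps_X)) p = p" .
  have "coeff p i = Abs_fps (\<lambda>n. coeff p i $ (n * m)) oo fps_X ^ m" for i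
  proof (rule rotation_invariant_fps[OF m])
    show "m dvd n" if "\<omega> ^ n = 1" for n using unit_root_power_eq_1_iff[OF m] that by (simp add: \<omega>_def)
    show "coeff p i oo (fps_const \<omega> * fps_X) = coeff p i"
      using arg_cong[OF p_rotate, of "\<lambda>q. coeff q i"] by (simp add: coeff_map_poly)
  qed
  then show ?thesis using that[of "\<lambda>i. Abs_fps (\<lambda>n. coeff p i $ (n * m))"] by (simp add: p_def e'_def \<omega>_def)
qed

lemma poly_as_sum_upto:
  fixes q :: "'a::comm_semiring_1 poly"
  shows "degree q \<le> N \<Longrightarrow> poly q x = (\<Sum>i\<le>N. coeff q i * x ^ i)"
  by (subst poly_as_sum_of_monoms'[symmetric]) (simp_all add: poly_sum poly_monom)

lemma curve_ideal_subset_rotation: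
  fixes V :: ser3
  assumes m: "m > 0" and k: "k $ 0 = 0"
    and \<gamma>: "centered_arc (a, b, fps_X ^ m)" and \<gamma>': "centered_arc (A, B, k ^ m)"
    and sub: "curve_ideal (a, b, fps_X ^ m) \<subseteq> curve_ideal (A, B, k ^ m)"
  obtains \<zeta> where "\<zeta> ^ m = 1"
    "subst3 V (A, B, k ^ m) = subst3 V (a, b, fps_X ^ m) oo (fps_const \<zeta> * k)"
proof -
  define e where "e = subst3 V (a, b, fps_X ^ m)"
  define E where "E = subst3 V (A, B, k ^ m)"
  define \<omega> where "\<omega> = unit_root m"
  define p where "p = (\<Prod>j<m. [:- (e oo (fps_const (\<omega> ^ j) * fps_X)), 1:])"
  obtain H where H: "\<And>i. coeff p i = H i oo fps_X ^ m"
    using rotation_orbit_polynomial_coeffs[OF m] unfolding p_def \<omega>_def by blast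
  define G where "G = (\<Sum>i\<le>degree p. V ^ i * lift_z (H i))"
  have subst3_G: "subst3 G (\<alpha>, \<beta>, \<delta>) = (\<Sum>i\<le>degree p. subst3 V (\<alpha>, \<beta>, \<delta>) ^ i * (H i oo \<delta>))"
    if "centered_arc (\<alpha>, \<beta>, \<delta>)" for \<alpha> \<beta> \<delta>
    by (simp add: G_def subst3_sum subst3_mult[OF that] subst3_power[OF that] subst3_lift_z)
  have "subst3 G (a, b, fps_X ^ m) = poly p e"
    by (simp add: subst3_G[OF \<gamma>] poly_altdef H e_def mult.commute)
  also have "\<dots> = 0"
    using m by (auto simp: p_def poly_prod intro!: prod_zero bexI[of _ 0])
  finally have "subst3 G (A, B, k ^ m) = 0" using sub by (auto simp: curve_ideal_def)
  moreover have "H i oo k ^ m = coeff p i oo k" for i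
  proof -
    have "H i oo k ^ m = H i oo (fps_X ^ m oo k)" by (simp add: fps_X_power_compose[OF k])
    also have "\<dots> = coeff p i oo k" by (simp add: H fps_compose_assoc[OF k] m)
    finally show ?thesis .
  qed
  ultimately have "poly (map_poly (\<lambda>f. f oo k) p) E = 0"
    by (simp add: subst3_G[OF \<gamma>'] poly_as_sum_upto[OF map_poly_degree_leq] coeff_map_poly
        E_def mult.commute)
  then have "(\<Prod>j<m. E - (e oo (fps_const (\<omega> ^ j) * fps_X) oo k)) = 0"
    by (simp add: p_def map_poly_compose_prod_linear[OF k] poly_prod)
  then obtain j where "E = e oo (fps_const (\<omega> ^ j) * fps_X) oo k" by auto
  also have "\<dots> = e oo (fps_const (\<omega> ^ j) * k)"
    by (simp add: k fps_compose_assoc[symmetric, OF k] fps_compose_mult_distrib[OF k])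
  finally show ?thesis
    using that[of "\<omega> ^ j"] unit_root_power_eq_1_iff[OF m, of "m * j"]
    by (simp add: E_def e_def \<omega>_def power_mult[symmetric] mult.commute)
qed

subsection \<open>A contraction principle for pairs of series\<close>

definition vanishes_to2 :: "'a::zero fps \<times> 'a fps \<Rightarrow> nat \<Rightarrow> bool" where
  "vanishes_to2 p N \<longleftrightarrow> vanishes_to (fst p) N \<and> vanishes_to (snd p) N"

lemma fps_pair_limit:
  fixes x :: "nat \<Rightarrow> 'a::ab_group_add fps \<times> 'a fps"
  assumes successive: "\<And>j. vanishes_to2 (x (Suc j) - x j) j"
  obtains p where "\<And>j. vanishes_to2 (p - x j) j"
proof -
  have stable: "fst (x i) $ l = fst (x (Suc l)) $ l \<and> snd (x i) $ l = snd (x (Suc l)) $ l"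
    if "Suc l \<le> i" for i l
    using that
  proof (induct i rule: dec_induct)
    case (step i)
    then show ?case using successive[of i] by (simp add: vanishes_to2_def vanishes_to_def)
  qed simp
  define p where "p = (Abs_fps (\<lambda>n. fst (x (Suc n)) $ n), Abs_fps (\<lambda>n. snd (x (Suc n)) $ n))"
  have close: "vanishes_to2 (p - x j) j" for j
  proof -
    have "fst p $ l = fst (x j) $ l \<and> snd p $ l = snd (x j) $ l" if "l < j" for l
      using stable[of l j] that by (simp add: p_def)
    then show ?thesis by (simp add: vanishes_to2_def vanishes_to_def)
  qed
  show ?thesis by (rule that[OF close])
qed

lemma fps_pair_contraction_fixpoint:
  fixes T :: "'a::ab_group_add fps \<times> 'a fps \<Rightarrow> 'a fps \<times> 'a fps"
  assumes into: "\<And>p. vanishes_to2 (T p) 1"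
    and contr: "\<And>p q n. vanishes_to2 p 1 \<Longrightarrow> vanishes_to2 q 1 \<Longrightarrow> vanishes_to2 (p - q) n \<Longrightarrow>
      vanishes_to2 (T p - T q) (Suc n)"
  obtains p where "T p = p"
proof -
  define x where "x j = (T ^^ j) 0" for j
  have x_Suc: "x (Suc j) = T (x j)" for j by (simp add: x_def)
  have x_1: "vanishes_to2 (x j) 1" for j
  proof (cases j)
    case 0
    then show ?thesis by (simp add: x_def vanishes_to2_def)
  next
    case (Suc i)
    then show ?thesis using into by (simp only: x_Suc)
  qed
  have "vanishes_to2 (x (Suc j) - x j) j" for j
  proof (induct j)
    case (Suc j)
    then show ?case using contr[OF x_1 x_1 Suc] by (simp only: x_Suc)
  qed (simp add: vanishes_to2_def)
  then obtain p where close: "\<And>j. vanishes_to2 (p - x j) j" using fps_pair_limit by blast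
  have p_1: "vanishes_to2 p 1"
    using close[of 1] x_1[of 1] by (simp add: vanishes_to2_def)
  have "vanishes_to2 (T p - p) (Suc n)" for n
  proof -
    have "vanishes_to2 (T p - T (x n)) (Suc n)" "vanishes_to2 (p - T (x n)) (Suc n)"
      using contr[OF p_1 x_1 close] close[of "Suc n"] by (simp_all add: x_Suc)
    then show ?thesis
      using vanishes_to_diff[of "fst (T p) - fst (T (x n))" "Suc n" "fst p - fst (T (x n))"]
        vanishes_to_diff[of "snd (T p) - snd (T (x n))" "Suc n" "snd p - snd (T (x n))"]
      by (simp add: vanishes_to2_def)
  qed
  then have "vanishes_to (fst (T p) - fst p) n" "vanishes_to (snd (T p) - snd p) n" for n
    using vanishes_to_mono[of _ "Suc n" n] by (auto simp: vanishes_to2_def)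
  then have "fst (T p) = fst p" "snd (T p) = snd p" by (blast intro: fps_eq_if_vanishes_to)+
  then show ?thesis by (intro that prod_eqI)
qed

subsection \<open>Twisted difference equations\<close>

text \<open>Comparing the coefficients of order \<open>d\<close> and \<open>d + M\<close>: the first forces \<open>\<zeta>\<^sup>d = 1\<close> if
  \<open>u\<^sub>d \<noteq> 0\<close>, and then the second reads \<open>\<nu> u\<^sub>d = 0\<close>.\<close>

lemma twisted_equation_coeff_zero:
  fixes u :: "complex fps"
  assumes \<nu>: "\<nu> \<noteq> 0" and \<zeta>: "\<zeta> ^ M = 1" and M: "M \<ge> 1" and u: "vanishes_to u d"
    and twisted: "vanishes_to ((u oo (fps_const \<zeta> * fps_X)) - u - fps_const \<nu> * fps_X ^ M * u) (M + d + 1)"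
  shows "u $ d = 0"
proof (rule ccontr)
  assume nz: "u $ d \<noteq> 0"
  have coeff: "\<zeta> ^ l * u $ l - u $ l - \<nu> * (if l < M then 0 else u $ (l - M)) = 0" if "l < M + d + 1" for l
    using twisted that by (simp add: vanishes_to_def fps_X_power_mult_nth mult.assoc)
  have "(if d < M then 0 else u $ (d - M)) = 0" using u M by (auto simp: vanishes_to_def)
  then have "(\<zeta> ^ d - 1) * u $ d = 0" using coeff[of d] by (simp add: algebra_simps)
  then have "\<zeta> ^ (d + M) = 1" using nz \<zeta> by (simp add: power_add)
  then have "\<nu> * u $ d = 0" using coeff[of "d + M"] by simp
  then show False using \<nu> nz by simp
qed

lemma twisted_equation_estimate:
  fixes e f g g' k K :: "complex fps"
  assumes m: "m > 0" and \<zeta>: "\<zeta> ^ m = 1"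
    and k: "k $ 0 = 0" "vanishes_to (k - fps_X) (M + 2)"
    and K: "K $ 0 = 0" "vanishes_to (k ^ m - K) (Suc (M + d))"
    and e: "e oo (fps_const \<zeta> * k) = e + fps_X ^ M * (fps_const \<nu> * e + g)"
    and f: "f oo K = (f oo fps_X ^ m) + fps_X ^ M * (fps_const \<nu> * (f oo fps_X ^ m) + g')"
    and g: "vanishes_to (g - g') (Suc d)"
  defines "u \<equiv> e - (f oo fps_X ^ m)"
  assumes u: "vanishes_to u d"
  shows "vanishes_to ((u oo (fps_const \<zeta> * fps_X)) - u - fps_const \<nu> * fps_X ^ M * u) (M + d + 1)"
proof -
  define \<kappa> where "\<kappa> = fps_const \<zeta> * k"
  have \<kappa>0: "\<kappa> $ 0 = 0" using k by (simp add: \<kappa>_def)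
  have "(f oo fps_X ^ m) oo \<kappa> = f oo (fps_X ^ m oo \<kappa>)"
    by (rule fps_compose_assoc[symmetric, OF \<kappa>0]) (use m in simp)
  also have "fps_X ^ m oo \<kappa> = \<kappa> ^ m" by (rule fps_X_power_compose[OF \<kappa>0])
  also have "\<kappa> ^ m = k ^ m" using \<zeta> by (simp add: \<kappa>_def power_mult_distrib fps_const_power)
  finally have f\<kappa>: "(f oo fps_X ^ m) oo \<kappa> = f oo k ^ m" .
  have "k ^ m $ 0 = 0" using k m by (simp add: fps_nth_power_0)
  then have D_order: "vanishes_to ((f oo k ^ m) - (f oo K)) (Suc (M + d))"
    using vanishes_to_compose_diff'[OF K(2)] K(1) by blast
  define E where "E = f oo fps_X ^ m"
  define D where "D = (f oo k ^ m) - (f oo K)"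
  have "u oo \<kappa> = (e oo \<kappa>) - (E oo \<kappa>)"
    by (simp add: u_def E_def fps_compose_sub_distrib)
  also have "e oo \<kappa> = e + fps_X ^ M * (fps_const \<nu> * e + g)" using e by (simp add: \<kappa>_def)
  also have "E oo \<kappa> = E + fps_X ^ M * (fps_const \<nu> * E + g') + D"
    using f f\<kappa> by (simp add: E_def D_def)
  finally have "(u oo \<kappa>) - u - fps_const \<nu> * fps_X ^ M * u = fps_X ^ M * (g - g') - D"
    by (simp add: u_def flip: E_def) (simp add: algebra_simps)
  moreover have "vanishes_to (fps_X ^ M * (g - g')) (Suc (M + d))"
    using vanishes_to_X_power_mult[OF g, of M] by (simp add: ac_simps)
  ultimately have twisted_\<kappa>: "vanishes_to ((u oo \<kappa>) - u - fps_const \<nu> * fps_X ^ M * u) (M + d + 1)"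
    using vanishes_to_diff[OF _ D_order[folded D_def]] by simp
  have "\<kappa> - fps_const \<zeta> * fps_X = fps_const \<zeta> * (k - fps_X)"
    by (simp add: \<kappa>_def right_diff_distrib)
  then have \<kappa>_close: "vanishes_to (\<kappa> - fps_const \<zeta> * fps_X) (Suc (Suc M))"
    using vanishes_to_mult_left[OF k(2)] by (simp add: numeral_2_eq_2)
  have "vanishes_to ((u oo \<kappa>) - (u oo (fps_const \<zeta> * fps_X))) (M + d + 1)"
    using vanishes_to_compose_diff[OF u \<kappa>_close \<kappa>0] by (simp add: add.commute)
  moreover have "(a - u - b) - (a - c) = c - u - b" for a b c :: "complex fps"
    by (simp add: algebra_simps)
  ultimately show ?thesis using vanishes_to_diff[OF twisted_\<kappa>] by metis
qed

subsection \<open>The degenerate spike\<close>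

locale degenerate_spike =
  fixes c :: nat and lam mu :: complex and P Q R :: ser3
  assumes c_pos: "c \<ge> 1" and lam_nonzero: "lam \<noteq> 0" and mu_nonzero: "mu \<noteq> 0"
    and P_order: "in_max_pow P 2" and Q_order: "in_max_pow Q 2" and R_order: "in_max_pow R 1"
begin

abbreviation F :: "ser3 \<times> ser3 \<times> ser3" where
  "F \<equiv> spike c lam mu P Q R"

lemma fixes_origin_F: "fixes_origin F"
proof -
  have Z3_power_mult: "in_max_pow (Z3 ^ n * h) 1" if "n \<ge> 1" for n h
    using in_max_pow_mult[OF in_max_pow_power[OF in_max_pow_Z3, of n] in_max_pow_0[of h]] that
    by (auto intro: in_max_pow_mono)
  show ?thesis unfolding spike_def fixes_origin_def prod.case
    by (intro conjI in_max_pow_add in_max_pow_X3 in_max_pow_Y3 in_max_pow_Z3 Z3_power_mult)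
      (use c_pos in simp_all)
qed

lemma image_arc_F:
  assumes "centered_arc (a, b, z)"
  shows "image_arc F (a, b, z) =
    (a + z ^ c * (fps_const lam * a + subst3 P (a, b, z)),
     b + z ^ c * (fps_const mu * b + subst3 Q (a, b, z)),
     z + z ^ (c + 1) * subst3 R (a, b, z))"
  using assms
  by (simp add: spike_def image_arc_def subst3_add subst3_mult subst3_power subst3_X3 subst3_Y3
      subst3_Z3 subst3_const3[unfolded const3_def])

definition graph_time :: "complex fps \<Rightarrow> complex fps \<Rightarrow> complex fps" where
  "graph_time \<phi> \<psi> = fps_X + fps_X ^ (c + 1) * subst3 R (\<phi>, \<psi>, fps_X)"

text \<open>The invariance equation \<open>f(graph_time \<phi> \<psi>) = f + t\<^sup>c (\<nu> f + G(\<phi>, \<psi>, t))\<close>,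
  solved for \<open>\<nu> f\<close>.\<close>

definition graph_op :: "complex \<Rightarrow> ser3 \<Rightarrow> complex fps \<Rightarrow> complex fps \<Rightarrow> complex fps \<Rightarrow> complex fps"
  where "graph_op \<nu> G f \<phi> \<psi> =
    fps_const (1 / \<nu>) * (fps_shift c ((f oo graph_time \<phi> \<psi>) - f) - subst3 G (\<phi>, \<psi>, fps_X))"

lemma graph_time_nth_0 [simp]: "graph_time \<phi> \<psi> $ 0 = 0"
  by (simp add: graph_time_def)

lemma vanishes_to_graph_time_diff_X: "vanishes_to (graph_time \<phi> \<psi> - fps_X) (Suc (Suc c))"
  using vanishes_to_X_power_mult[of "subst3 R (\<phi>, \<psi>, fps_X)" 1 "c + 1"]
  by (simp add: graph_time_def subst3_nth_0[OF R_order])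

lemma vanishes_to_graph_time_diff:
  assumes "centered_arc (\<phi>, \<psi>, fps_X)" "centered_arc (\<phi>', \<psi>', fps_X)"
    and "vanishes_to (\<phi> - \<phi>') (Suc n)" "vanishes_to (\<psi> - \<psi>') (Suc n)"
  shows "vanishes_to (graph_time \<phi> \<psi> - graph_time \<phi>' \<psi>') (Suc (n + c + 1))"
proof -
  let ?D = "subst3 R (\<phi>, \<psi>, fps_X) - subst3 R (\<phi>', \<psi>', fps_X)"
  have "vanishes_to ?D (n + 1)"
    using vanishes_to_subst3_diff[OF R_order assms] by simp
  then have "vanishes_to (fps_X ^ (c + 1) * ?D) (n + 1 + (c + 1))"
    by (rule vanishes_to_X_power_mult)
  moreover have "graph_time \<phi> \<psi> - graph_time \<phi>' \<psi>' = fps_X ^ (c + 1) * ?D"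
    by (simp add: graph_time_def right_diff_distrib)
  moreover have "Suc (n + c + 1) = n + 1 + (c + 1)" by simp
  ultimately show ?thesis by metis
qed

lemma graph_op_nth_0: "in_max_pow G 2 \<Longrightarrow> graph_op \<nu> G f \<phi> \<psi> $ 0 = 0"
  using vanishes_to_compose_diff[of f 0 "graph_time \<phi> \<psi>" fps_X "Suc c"]
    vanishes_to_graph_time_diff_X subst3_nth_0[of G "(\<phi>, \<psi>, fps_X)"]
  by (simp add: graph_op_def vanishes_to_def in_max_pow_mono)

lemma graph_op_contraction:
  assumes G: "in_max_pow G 2"
    and arcs: "centered_arc (\<phi>, \<psi>, fps_X)" "centered_arc (\<phi>', \<psi>', fps_X)"
    and close: "vanishes_to (f - f') n" "vanishes_to (\<phi> - \<phi>') n" "vanishes_to (\<psi> - \<psi>') n"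
  shows "vanishes_to (graph_op \<nu> G f \<phi> \<psi> - graph_op \<nu> G f' \<phi>' \<psi>') (Suc n)"
proof (cases n)
  case 0
  then show ?thesis using graph_op_nth_0[OF G] by simp
next
  case (Suc n')
  let ?k = "graph_time \<phi> \<psi>" and ?k' = "graph_time \<phi>' \<psi>'"
  have split: "((f oo ?k) - f) - ((f' oo ?k') - f') =
      (((f - f') oo ?k) - ((f - f') oo fps_X)) + ((f' oo ?k) - (f' oo ?k'))"
    by (simp add: fps_compose_sub_distrib algebra_simps)
  have "vanishes_to (((f - f') oo ?k) - ((f - f') oo fps_X)) (Suc n + c)"
    using vanishes_to_compose_diff[OF close(1) vanishes_to_graph_time_diff_X] by (simp add: add.commute)
  moreover have "vanishes_to ((f' oo ?k) - (f' oo ?k')) (Suc n + c)"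
    using vanishes_to_compose_diff'[OF vanishes_to_graph_time_diff[OF arcs]] close Suc by simp
  ultimately have "vanishes_to (((f oo ?k) - f) - ((f' oo ?k') - f')) (Suc n + c)"
    unfolding split by (rule vanishes_to_add)
  moreover have "vanishes_to (subst3 G (\<phi>, \<psi>, fps_X) - subst3 G (\<phi>', \<psi>', fps_X)) (Suc n)"
    using vanishes_to_subst3_diff[OF G arcs, of n'] close Suc by simp
  ultimately have "vanishes_to (fps_shift c (((f oo ?k) - f) - ((f' oo ?k') - f')) -
      (subst3 G (\<phi>, \<psi>, fps_X) - subst3 G (\<phi>', \<psi>', fps_X))) (Suc n)"
    by (intro vanishes_to_diff[OF vanishes_to_shift])
  moreover have "graph_op \<nu> G f \<phi> \<psi> - graph_op \<nu> G f' \<phi>' \<psi>' = fps_const (1 / \<nu>) *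
      (fps_shift c (((f oo ?k) - f) - ((f' oo ?k') - f')) -
        (subst3 G (\<phi>, \<psi>, fps_X) - subst3 G (\<phi>', \<psi>', fps_X)))"
  proof -
    have regroup: "(a - s) - (b - t) = (a - b) - (s - t)" for a b s t :: "complex fps"
      by simp
    show ?thesis
      unfolding graph_op_def right_diff_distrib[symmetric] regroup fps_shift_diff ..
  qed
  ultimately show ?thesis by (simp only: vanishes_to_mult_left)
qed

lemma graph_op_fixpoint_eq:
  assumes "\<nu> \<noteq> 0" "graph_op \<nu> G f \<phi> \<psi> = f"
  shows "f oo graph_time \<phi> \<psi> = f + fps_X ^ c * (fps_const \<nu> * f + subst3 G (\<phi>, \<psi>, fps_X))"
proof -
  let ?D = "(f oo graph_time \<phi> \<psi>) - f"
  have "vanishes_to ?D (Suc c)"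
    using vanishes_to_compose_diff[OF vanishes_to_0(2) vanishes_to_graph_time_diff_X] by simp
  then have "vanishes_to ?D c" by (rule vanishes_to_mono) simp
  then have "?D = fps_X ^ c * fps_shift c ?D" by (simp add: X_power_mult_shift)
  moreover have "fps_shift c ?D = fps_const \<nu> * f + subst3 G (\<phi>, \<psi>, fps_X)"
  proof -
    have "fps_const \<nu> * f = fps_const \<nu> * graph_op \<nu> G f \<phi> \<psi>" using assms(2) by simp
    also have "\<dots> = fps_const (\<nu> * (1 / \<nu>)) * (fps_shift c ?D - subst3 G (\<phi>, \<psi>, fps_X))"
      by (simp only: graph_op_def mult.assoc[symmetric] fps_const_mult)
    finally show ?thesis using assms(1) by simp
  qed
  ultimately have "(f oo graph_time \<phi> \<psi>) - f = fps_X ^ c * (fps_const \<nu> * f + subst3 G (\<phi>, \<psi>, fps_X))"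
    by simp
  then show ?thesis by (metis add.commute diff_add_cancel)
qed

definition graph_map :: "complex fps \<times> complex fps \<Rightarrow> complex fps \<times> complex fps" where
  "graph_map p = (graph_op lam P (fst p) (fst p) (snd p), graph_op mu Q (snd p) (fst p) (snd p))"

definition graph_coords :: "complex fps \<times> complex fps" where
  "graph_coords = (SOME p. graph_map p = p)"

definition phi :: "complex fps" where "phi = fst graph_coords"
definition psi :: "complex fps" where "psi = snd graph_coords"

lemma graph_map_graph_coords: "graph_map graph_coords = graph_coords"
proof -
  have into: "vanishes_to2 (graph_map p) 1" for p
    by (simp add: graph_map_def vanishes_to2_def graph_op_nth_0 P_order Q_order)
  have contr: "vanishes_to2 (graph_map p - graph_map q) (Suc n)"
    if "vanishes_to2 p 1" "vanishes_to2 q 1" "vanishes_to2 (p - q) n" for p q n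
  proof -
    from that have arcs: "centered_arc (fst p, snd p, fps_X)" "centered_arc (fst q, snd q, fps_X)"
      and close: "vanishes_to (fst p - fst q) n" "vanishes_to (snd p - snd q) n"
      by (simp_all add: vanishes_to2_def)
    have "vanishes_to (graph_op lam P (fst p) (fst p) (snd p) - graph_op lam P (fst q) (fst q) (snd q))
        (Suc n)"
      by (rule graph_op_contraction[OF P_order arcs close(1) close])
    moreover have "vanishes_to (graph_op mu Q (snd p) (fst p) (snd p) - graph_op mu Q (snd q) (fst q) (snd q))
        (Suc n)"
      by (rule graph_op_contraction[OF Q_order arcs close(2) close])
    ultimately show ?thesis by (simp add: graph_map_def vanishes_to2_def)
  qed
  obtain p where "graph_map p = p" by (rule fps_pair_contraction_fixpoint[OF into contr])
  then show ?thesis unfolding graph_coords_def by (rule someI)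
qed

lemma graph_op_phi: "graph_op lam P phi phi psi = phi"
  and graph_op_psi: "graph_op mu Q psi phi psi = psi"
  using arg_cong[OF graph_map_graph_coords, of fst] arg_cong[OF graph_map_graph_coords, of snd]
  unfolding graph_map_def phi_def psi_def fst_conv snd_conv .

lemma centered_graph: "centered_arc (phi, psi, fps_X)"
  using graph_op_nth_0[OF P_order, of lam phi phi psi] graph_op_nth_0[OF Q_order, of mu psi phi psi]
  by (simp add: graph_op_phi graph_op_psi)

lemma image_arc_graph:
  "image_arc F (phi, psi, fps_X) = reparam_arc (phi, psi, fps_X) (graph_time phi psi)"
  using image_arc_F[OF centered_graph]
    graph_op_fixpoint_eq[OF lam_nonzero graph_op_phi] graph_op_fixpoint_eq[OF mu_nonzero graph_op_psi]
  by (simp add: graph_time_def reparam_arc_Pair)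

lemma invariant_graph_curve: "invariant_curve F (curve_ideal (phi, psi, fps_X))"
proof -
  have "subst3 g (image_arc F (phi, psi, fps_X)) = subst3 g (phi, psi, fps_X) oo graph_time phi psi"
    for g
    unfolding image_arc_graph by (rule subst3_reparam_arc[OF centered_graph graph_time_nth_0])
  then show ?thesis
    by (simp add: invariant_curve_def curve_ideal_def subst3_comp3[OF fixes_origin_F centered_graph])
qed

lemma graph_time_compose_X_power:
  assumes "m > 0" "centered_arc (\<phi>, \<psi>, fps_X)"
  shows "graph_time \<phi> \<psi> oo fps_X ^ m =
    fps_X ^ m * (1 + fps_X ^ (m * c) * subst3 R (\<phi> oo fps_X ^ m, \<psi> oo fps_X ^ m, fps_X ^ m))"
proof -
  have X0: "(fps_X ^ m :: complex fps) $ 0 = 0" using assms(1) by simp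
  have "subst3 R (\<phi>, \<psi>, fps_X) oo fps_X ^ m = subst3 R (\<phi> oo fps_X ^ m, \<psi> oo fps_X ^ m, fps_X ^ m)"
    by (rule subst3_compose_X_power[OF assms])
  then show ?thesis
    by (simp add: fps_X_fps_compose_startby0[OF X0] graph_time_def fps_compose_add_distrib fps_compose_mult_distrib[OF X0]
        fps_compose_power[OF X0, symmetric] power_mult distrib_left mult.assoc)
qed

lemma graph_op_fixpoint_compose_X_power:
  assumes "m > 0" "centered_arc (\<phi>, \<psi>, fps_X)" "\<nu> \<noteq> 0" "graph_op \<nu> G f \<phi> \<psi> = f"
  shows "f oo (graph_time \<phi> \<psi> oo fps_X ^ m) = (f oo fps_X ^ m) + fps_X ^ (m * c) *
    (fps_const \<nu> * (f oo fps_X ^ m) + subst3 G (\<phi> oo fps_X ^ m, \<psi> oo fps_X ^ m, fps_X ^ m))"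
proof -
  have X0: "(fps_X ^ m :: complex fps) $ 0 = 0" using assms(1) by simp
  have "f oo (graph_time \<phi> \<psi> oo fps_X ^ m) = (f oo graph_time \<phi> \<psi>) oo fps_X ^ m"
    by (rule fps_compose_assoc[OF X0]) simp
  also have "\<dots> = (f + fps_X ^ c * (fps_const \<nu> * f + subst3 G (\<phi>, \<psi>, fps_X))) oo fps_X ^ m"
    using graph_op_fixpoint_eq[OF assms(3,4)] by simp
  also have "\<dots> = (f oo fps_X ^ m) + fps_X ^ (m * c) *
      (fps_const \<nu> * (f oo fps_X ^ m) + subst3 G (\<phi> oo fps_X ^ m, \<psi> oo fps_X ^ m, fps_X ^ m))"
    by (simp add: fps_X_fps_compose_startby0[OF X0] fps_compose_add_distrib fps_compose_mult_distrib[OF X0]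
        fps_compose_power[OF X0, symmetric] power_mult subst3_compose_X_power[OF assms(1,2)])
  finally show ?thesis .
qed

lemma invariant_arc_rotation:
  assumes m: "m > 0" and \<gamma>: "centered_arc (a, b, fps_X ^ m)"
    and inv: "curve_ideal (a, b, fps_X ^ m) \<subseteq> curve_ideal (image_arc F (a, b, fps_X ^ m))"
  obtains k \<zeta>\<^sub>1 \<zeta>\<^sub>2 where "k $ 0 = 0" "vanishes_to (k - fps_X) (m * c + 2)"
    "k ^ m = fps_X ^ m * (1 + fps_X ^ (m * c) * subst3 R (a, b, fps_X ^ m))"
    "\<zeta>\<^sub>1 ^ m = 1"
    "a oo (fps_const \<zeta>\<^sub>1 * k) = a + fps_X ^ (m * c) * (fps_const lam * a + subst3 P (a, b, fps_X ^ m))"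
    "\<zeta>\<^sub>2 ^ m = 1"
    "b oo (fps_const \<zeta>\<^sub>2 * k) = b + fps_X ^ (m * c) * (fps_const mu * b + subst3 Q (a, b, fps_X ^ m))"
proof -
  let ?\<gamma> = "(a, b, fps_X ^ m)"
  have "vanishes_to (fps_X ^ (m * c) * subst3 R ?\<gamma>) (Suc (m * c))"
    using vanishes_to_X_power_mult[of "subst3 R ?\<gamma>" 1 "m * c"] subst3_nth_0[OF R_order] by simp
  then obtain k where k: "k $ 0 = 0" "k ^ m = fps_X ^ m * (1 + fps_X ^ (m * c) * subst3 R ?\<gamma>)"
    "vanishes_to (k - fps_X) (m * c + 2)"
    using exists_root_X_power_perturbation[OF m] by blast
  define A where "A = a + fps_X ^ (m * c) * (fps_const lam * a + subst3 P ?\<gamma>)"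
  define B where "B = b + fps_X ^ (m * c) * (fps_const mu * b + subst3 Q ?\<gamma>)"
  have "fps_X ^ m + (fps_X ^ m) ^ (c + 1) * r = fps_X ^ m * (1 + fps_X ^ (m * c) * r)"
    for r :: "complex fps"
    by (simp add: power_mult distrib_left mult.assoc)
  then have image: "image_arc F ?\<gamma> = (A, B, k ^ m)"
    using image_arc_F[OF \<gamma>] k(2) by (simp add: A_def B_def power_mult)
  have centered: "centered_arc (A, B, k ^ m)"
    using centered_image_arc[OF fixes_origin_F \<gamma>] image by simp
  have sub: "curve_ideal ?\<gamma> \<subseteq> curve_ideal (A, B, k ^ m)" using inv image by simp
  obtain \<zeta>\<^sub>1 where "\<zeta>\<^sub>1 ^ m = 1" "A = a oo (fps_const \<zeta>\<^sub>1 * k)"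
    using curve_ideal_subset_rotation[OF m k(1) \<gamma> centered sub, of X3] \<gamma> centered
    by (auto simp: subst3_X3)
  moreover obtain \<zeta>\<^sub>2 where "\<zeta>\<^sub>2 ^ m = 1" "B = b oo (fps_const \<zeta>\<^sub>2 * k)"
    using curve_ideal_subset_rotation[OF m k(1) \<gamma> centered sub, of Y3] \<gamma> centered
    by (auto simp: subst3_Y3)
  ultimately show ?thesis using that k by (simp add: A_def B_def)
qed

lemma lifted_graph_coordinate_step:
  assumes m: "m > 0" and \<gamma>: "centered_arc (a, b, fps_X ^ m)"
    and k: "k $ 0 = 0" "vanishes_to (k - fps_X) (m * c + 2)"
      "k ^ m = fps_X ^ m * (1 + fps_X ^ (m * c) * subst3 R (a, b, fps_X ^ m))"
    and graph: "\<nu> \<noteq> 0" "in_max_pow G 2" "graph_op \<nu> G f phi psi = f"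
    and \<zeta>: "\<zeta> ^ m = 1"
      "e oo (fps_const \<zeta> * k) = e + fps_X ^ (m * c) * (fps_const \<nu> * e + subst3 G (a, b, fps_X ^ m))"
    and close: "vanishes_to (a - (phi oo fps_X ^ m)) (Suc n)" "vanishes_to (b - (psi oo fps_X ^ m)) (Suc n)"
      "vanishes_to (e - (f oo fps_X ^ m)) (Suc n)"
  shows "(e - (f oo fps_X ^ m)) $ Suc n = 0"
proof -
  let ?\<gamma> = "(a, b, fps_X ^ m)" and ?\<Gamma> = "(phi oo fps_X ^ m, psi oo fps_X ^ m, fps_X ^ m)"
  let ?K = "graph_time phi psi oo fps_X ^ m"
  have \<Gamma>: "centered_arc ?\<Gamma>" using centered_graph m by simp
  have K: "?K $ 0 = 0" "?K = fps_X ^ m * (1 + fps_X ^ (m * c) * subst3 R ?\<Gamma>)"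
    using graph_time_compose_X_power[OF m centered_graph] m by simp_all
  have same_z: "vanishes_to (fps_X ^ m - fps_X ^ m :: complex fps) (Suc n)" by simp
  have G: "vanishes_to (subst3 G ?\<gamma> - subst3 G ?\<Gamma>) (Suc (Suc n))"
    using vanishes_to_subst3_diff[OF graph(2) \<gamma> \<Gamma> close(1,2) same_z] by simp
  have "vanishes_to (subst3 R ?\<gamma> - subst3 R ?\<Gamma>) (Suc n)"
    using vanishes_to_subst3_diff[OF R_order \<gamma> \<Gamma> close(1,2) same_z] by simp
  then have "vanishes_to (fps_X ^ (m * c) * (fps_X ^ m * (subst3 R ?\<gamma> - subst3 R ?\<Gamma>)))
      (Suc n + m + m * c)"
    by (intro vanishes_to_X_power_mult)
  moreover have "k ^ m - ?K = fps_X ^ (m * c) * (fps_X ^ m * (subst3 R ?\<gamma> - subst3 R ?\<Gamma>))"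
    by (simp only: k(3) K(2)) (simp add: algebra_simps)
  ultimately have "vanishes_to (k ^ m - ?K) (Suc n + m + m * c)" by simp
  then have kK: "vanishes_to (k ^ m - ?K) (Suc (m * c + Suc n))"
    by (rule vanishes_to_mono) (use m in simp)
  have "\<zeta> ^ (m * c) = 1" using \<zeta>(1) by (simp add: power_mult)
  moreover have "m * c \<ge> 1" using m c_pos by simp
  ultimately show ?thesis
    using twisted_equation_coeff_zero[OF graph(1) _ _ close(3) twisted_equation_estimate[OF m \<zeta>(1)
        k(1,2) K(1) kK \<zeta>(2) graph_op_fixpoint_compose_X_power[OF m centered_graph graph(1,3)] G close(3)]]
    by blast
qed

lemma invariant_arc_eq_lifted_graph:
  assumes m: "m > 0" and \<gamma>: "centered_arc (a, b, fps_X ^ m)"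
    and inv: "curve_ideal (a, b, fps_X ^ m) \<subseteq> curve_ideal (image_arc F (a, b, fps_X ^ m))"
  shows "a = phi oo fps_X ^ m" "b = psi oo fps_X ^ m"
proof -
  obtain k \<zeta>\<^sub>1 \<zeta>\<^sub>2 where k: "k $ 0 = 0" "vanishes_to (k - fps_X) (m * c + 2)"
      "k ^ m = fps_X ^ m * (1 + fps_X ^ (m * c) * subst3 R (a, b, fps_X ^ m))"
    and \<zeta>\<^sub>1: "\<zeta>\<^sub>1 ^ m = 1"
      "a oo (fps_const \<zeta>\<^sub>1 * k) = a + fps_X ^ (m * c) * (fps_const lam * a + subst3 P (a, b, fps_X ^ m))"
    and \<zeta>\<^sub>2: "\<zeta>\<^sub>2 ^ m = 1"
      "b oo (fps_const \<zeta>\<^sub>2 * k) = b + fps_X ^ (m * c) * (fps_const mu * b + subst3 Q (a, b, fps_X ^ m))"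
    by (rule invariant_arc_rotation[OF m \<gamma> inv])
  have "vanishes_to (a - (phi oo fps_X ^ m)) (Suc n) \<and> vanishes_to (b - (psi oo fps_X ^ m)) (Suc n)"
    for n
  proof (induct n)
    case 0
    then show ?case using \<gamma> centered_graph m by simp
  next
    case (Suc n)
    then have "(a - (phi oo fps_X ^ m)) $ Suc n = 0" "(b - (psi oo fps_X ^ m)) $ Suc n = 0"
      using lifted_graph_coordinate_step[OF m \<gamma> k lam_nonzero P_order graph_op_phi \<zeta>\<^sub>1]
        lifted_graph_coordinate_step[OF m \<gamma> k mu_nonzero Q_order graph_op_psi \<zeta>\<^sub>2]
      by blast+
    with Suc show ?case by (auto simp: vanishes_to_def less_Suc_eq)
  qed
  then have "vanishes_to (a - (phi oo fps_X ^ m)) n" "vanishes_to (b - (psi oo fps_X ^ m)) n" for n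
    using vanishes_to_mono[of _ "Suc n" n] by auto
  then show "a = phi oo fps_X ^ m" "b = psi oo fps_X ^ m"
    by (blast intro: fps_eq_if_vanishes_to)+
qed

lemma unique_invariant_curve:
  assumes "formal_curve C" "invariant_curve F C" "\<not> contained_in_E C"
  shows "C = curve_ideal (phi, psi, fps_X)"
proof -
  obtain \<gamma> where "is_arc \<gamma>" "C = curve_ideal \<gamma>" using assms(1) by (auto simp: formal_curve_def)
  moreover obtain a b z where "\<gamma> = (a, b, z)" by (cases \<gamma>)
  ultimately have centered: "centered_arc (a, b, z)" and C: "C = curve_ideal (a, b, z)"
    by (simp_all add: is_arc_iff)
  have "z \<noteq> 0"
    using assms(3) by (simp add: C contained_in_E_def curve_ideal_def subst3_Z3[OF centered])
  then obtain a' b' m where m: "m > 0" and \<gamma>: "centered_arc (a', b', fps_X ^ m)"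
    and C': "C = curve_ideal (a', b', fps_X ^ m)"
    unfolding C by (rule curve_ideal_normal_form[OF centered])
  have "subst3 g (image_arc F (a', b', fps_X ^ m)) = 0" if "subst3 g (a', b', fps_X ^ m) = 0" for g
  proof -
    have "comp3 g F \<in> C"
      using assms(2) that unfolding invariant_curve_def C' curve_ideal_def by blast
    then show ?thesis by (simp add: C' curve_ideal_def subst3_comp3[OF fixes_origin_F \<gamma>])
  qed
  then have "curve_ideal (a', b', fps_X ^ m) \<subseteq> curve_ideal (image_arc F (a', b', fps_X ^ m))"
    by (auto simp: curve_ideal_def)
  then have "a' = phi oo fps_X ^ m" "b' = psi oo fps_X ^ m"
    by (rule invariant_arc_eq_lifted_graph[OF m \<gamma>])+
  then have "(a', b', fps_X ^ m) = reparam_arc (phi, psi, fps_X) (fps_X ^ m)"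
    using m by (simp add: reparam_arc_Pair)
  then show ?thesis
    using C' curve_ideal_reparam_arc[OF centered_graph, of "fps_X ^ m"] m by simp
qed

lemma graph_curve:
  "formal_curve (curve_ideal (phi, psi, fps_X))"
  "invariant_curve F (curve_ideal (phi, psi, fps_X))"
  "\<not> contained_in_E (curve_ideal (phi, psi, fps_X))"
  "smooth_curve (curve_ideal (phi, psi, fps_X))"
  "transverse_E (curve_ideal (phi, psi, fps_X))"
proof -
  have arc: "is_arc (phi, psi, fps_X)" using centered_graph by (simp add: is_arc_iff)
  then show "formal_curve (curve_ideal (phi, psi, fps_X))" by (auto simp: formal_curve_def)
  show "invariant_curve F (curve_ideal (phi, psi, fps_X))" by (rule invariant_graph_curve)
  show "\<not> contained_in_E (curve_ideal (phi, psi, fps_X))"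
    using subst3_Z3[OF centered_graph] by (simp add: contained_in_E_def curve_ideal_def)
  show "smooth_curve (curve_ideal (phi, psi, fps_X))" "transverse_E (curve_ideal (phi, psi, fps_X))"
    unfolding smooth_curve_def transverse_E_def
    using arc by (intro exI[of _ phi] exI[of _ psi] exI[of _ fps_X]; simp)+
qed

end

theorem proposition5p1:
  fixes c :: nat and lam mu :: complex and P Q R :: ser3
  assumes "c \<ge> 1"
    and "lam \<noteq> 0"
    and "\<exists>r::real. r < 0 \<and> mu = of_real r * lam"
    and "in_max_pow P 2" and "in_max_pow Q 2" and "in_max_pow R 1"
  shows "(\<exists>!C. formal_curve C \<and> invariant_curve (spike c lam mu P Q R) C \<and> \<not> contained_in_E C)
    \<and> (\<forall>C. formal_curve C \<and> invariant_curve (spike c lam mu P Q R) C \<and> \<not> contained_in_E C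
           \<longrightarrow> smooth_curve C \<and> transverse_E C)"
proof -
  interpret degenerate_spike c lam mu P Q R
    using assms by unfold_locales auto
  show ?thesis using graph_curve unique_invariant_curve by metis
qed

end
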